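(* Let $d\ge2$, $L\ge1$, $\lambda>0$, let $\mu_0^\star,\mu_1^\star\in\mathbb{S}^{d-1}$ be orthonormal, and let the rows $X_1,\dots,X_L$ of $\mathbb{X}$ be i.i.d. with law $\frac12\delta_{\mu_0^\star}+\frac12\delta_{\mu_1^\star}$. Then for all $\mu_0,\mu_1\in\mathbb{R}^d$, $\mathcal{R}(\mu_0,\mu_1)=\mathcal{R}^<(\kappa_0,\kappa_1,\eta_0,\eta_1)$ where $\mathcal{R}^<:\mathbb{R}^4\to\mathbb{R}$ is $$\mathcal{R}^<(\kappa_0,\kappa_1,\eta_0,\eta_1)=1-\lambda\frac{L+1}{L}(\kappa_0^2+\kappa_1^2+\eta_0^2+\eta_1^2)+\lambda^2\frac{L+3}{2L}\big([\kappa_0^2+\eta_0^2]^2+[\kappa_1^2+\eta_1^2]^2\big)+\lambda^2\frac{L-1}{L}(\kappa_0\eta_1+\kappa_1\eta_0)^2.$$ In addition, if $(\mu_0,\mu_1)\in(\mathbb{S}^{d-1})^2$, then $(\kappa_0,\kappa_1,\eta_0,\eta_1)\in[-1,1]^4$.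
   Context: $\kappa_0=\langle\mu_0^\star,\mu_0\rangle$, $\kappa_1=\langle\mu_1^\star,\mu_1\rangle$, $\eta_0=\langle\mu_1,\mu_0^\star\rangle$, $\eta_1=\langle\mu_0,\mu_1^\star\rangle$. $T^{\mathrm{lin},\mu_0,\mu_1}(\mathbb{X})_\ell=\frac{2}{L}\sum_{k=1}^L\lambda\,X_\ell^\top(\mu_0\mu_0^\top+\mu_1\mu_1^\top)X_k\,X_k$ and $\mathcal{R}(\mu_0,\mu_1)=\frac1L\sum_{\ell=1}^L\mathbb{E}\|X_\ell-T^{\mathrm{lin},\mu_0,\mu_1}(\mathbb{X})_\ell\|_2^2$. *)

theory Defs
  imports "HOL-Analysis.Analysis" "HOL-Probability.Probability"
begin

definition two_point_law :: "'a \<Rightarrow> 'a \<Rightarrow> 'a pmf" where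
  "two_point_law a b = map_pmf (\<lambda>c. if c then b else a) (bernoulli_pmf (1/2))"

definition rows_law :: "nat \<Rightarrow> 'a::zero pmf \<Rightarrow> (nat \<Rightarrow> 'a) pmf" where
  "rows_law L p = Pi_pmf {1..L} 0 (\<lambda>_. p)"

text \<open>T^lin(X)_l = (2/L) sum_k lambda X_l^T (mu0 mu0^T + mu1 mu1^T) X_k X_k,
  with X_l^T (mu0 mu0^T + mu1 mu1^T) X_k written out as
  (X_l . mu0)(mu0 . X_k) + (X_l . mu1)(mu1 . X_k).\<close>
definition T_lin :: "real \<Rightarrow> nat \<Rightarrow> real^'d \<Rightarrow> real^'d \<Rightarrow> (nat \<Rightarrow> real^'d) \<Rightarrow> nat \<Rightarrow> real^'d" where
  "T_lin lam L mu0 mu1 X l =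
     (2 / real L) *\<^sub>R (\<Sum>k\<in>{1..L}.
        (lam * ((X l \<bullet> mu0) * (mu0 \<bullet> X k) + (X l \<bullet> mu1) * (mu1 \<bullet> X k))) *\<^sub>R X k)"

definition risk :: "real \<Rightarrow> nat \<Rightarrow> real^'d \<Rightarrow> real^'d \<Rightarrow> real^'d \<Rightarrow> real^'d \<Rightarrow> real" where
  "risk lam L ms0 ms1 mu0 mu1 =
     (1 / real L) * (\<Sum>l\<in>{1..L}.
        measure_pmf.expectation (rows_law L (two_point_law ms0 ms1))
          (\<lambda>X. (norm (X l - T_lin lam L mu0 mu1 X l))\<^sup>2))"

definition risk_red :: "real \<Rightarrow> nat \<Rightarrow> real \<Rightarrow> real \<Rightarrow> real \<Rightarrow> real \<Rightarrow> real" where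
  "risk_red lam L k0 k1 e0 e1 =
     1 - lam * (real L + 1) / real L * (k0\<^sup>2 + k1\<^sup>2 + e0\<^sup>2 + e1\<^sup>2)
     + lam\<^sup>2 * (real L + 3) / (2 * real L) * ((k0\<^sup>2 + e0\<^sup>2)\<^sup>2 + (k1\<^sup>2 + e1\<^sup>2)\<^sup>2)
     + lam\<^sup>2 * (real L - 1) / real L * (k0 * e1 + k1 * e0)\<^sup>2"

end

theory Submission
  imports Defs
begin

text \<open>Write A = att_form mu0 mu1, i.e. A(x, y) = x \<bullet> mu0 * mu0 \<bullet> y + x \<bullet> mu1 * mu1 \<bullet> y,
  the bilinear form of mu0 mu0^T + mu1 mu1^T. Expanding the square,
  |X_l - T_l|^2 = |X_l|^2 - (4 lam / L) sum_k A(X_l, X_k) (X_l \<bullet> X_k)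
    + (4 lam^2 / L^2) sum_{k,m} A(X_l, X_k) A(X_l, X_m) (X_k \<bullet> X_m).
  Every summand depends on at most three rows, so by independence its expectation only depends
  on which of the indices l, k, m coincide, and it is a moment of one, two or three independent
  copies of the two-point law. As the two atoms are orthonormal, all these moments are
  polynomials in A(mu0*, mu0*) = kappa0^2 + eta0^2, A(mu1*, mu1*) = kappa1^2 + eta1^2 and
  A(mu0*, mu1*) = kappa0 eta1 + kappa1 eta0; counting the index patterns yields R^<.
  The bounds on kappa and eta are Cauchy-Schwarz.\<close>

lemma map_pmf_Pi_pmf_pair:
  assumes "finite A" "i \<in> A" "j \<in> A" "i \<noteq> j"
  shows "map_pmf (\<lambda>X. (X i, X j)) (Pi_pmf A d P) = pair_pmf (P i) (P j)"
proof -
  have "map_pmf (\<lambda>X. (X i, X j)) (Pi_pmf A d P) =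
      map_pmf (\<lambda>X. (X i, X j)) (Pi_pmf {i, j} d P)"
    using assms by (subst Pi_pmf_subset[of A "{i, j}"]) (auto simp: map_pmf_comp)
  also have "\<dots> = map_pmf (apsnd (\<lambda>X. X j)) (pair_pmf (P i) (Pi_pmf {j} d P))"
    using assms by (simp add: Pi_pmf_insert map_pmf_comp case_prod_unfold apsnd_def map_prod_def)
  also have "\<dots> = pair_pmf (P i) (P j)"
    by (simp add: pair_map_pmf2 [symmetric] Pi_pmf_component)
  finally show ?thesis .
qed

lemma map_pmf_Pi_pmf_triple:
  assumes "finite A" "i \<in> A" "j \<in> A" "k \<in> A" "i \<noteq> j" "i \<noteq> k" "j \<noteq> k"
  shows "map_pmf (\<lambda>X. (X i, X j, X k)) (Pi_pmf A d P) = pair_pmf (P i) (pair_pmf (P j) (P k))"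
proof -
  have "map_pmf (\<lambda>X. (X i, X j, X k)) (Pi_pmf A d P) =
      map_pmf (\<lambda>X. (X i, X j, X k)) (Pi_pmf {i, j, k} d P)"
    using assms by (subst Pi_pmf_subset[of A "{i, j, k}"]) (auto simp: map_pmf_comp)
  also have "\<dots> = map_pmf (apsnd (\<lambda>X. (X j, X k))) (pair_pmf (P i) (Pi_pmf {j, k} d P))"
    using assms by (simp add: Pi_pmf_insert map_pmf_comp case_prod_unfold apsnd_def map_prod_def)
  also have "\<dots> = pair_pmf (P i) (pair_pmf (P j) (P k))"
    using assms by (simp add: pair_map_pmf2 [symmetric] map_pmf_Pi_pmf_pair)
  finally show ?thesis .
qed

lemma expectation_pair_pmf:
  fixes f :: "'a \<Rightarrow> 'b \<Rightarrow> real"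
  assumes "finite (set_pmf p)" "finite (set_pmf q)"
  shows "measure_pmf.expectation (pair_pmf p q) (\<lambda>(x, y). f x y) =
    measure_pmf.expectation p (\<lambda>x. measure_pmf.expectation q (f x))"
proof -
  have "measure_pmf.expectation (pair_pmf p q) (\<lambda>(x, y). f x y) =
      (\<Sum>x\<in>set_pmf p.
        pmf p x *\<^sub>R measure_pmf.expectation (map_pmf (Pair x) q) (\<lambda>(x, y). f x y))"
    unfolding pair_pmf_def map_pmf_def[symmetric] using assms
    by (intro pmf_expectation_bind) auto
  also have "\<dots> = measure_pmf.expectation p (\<lambda>x. measure_pmf.expectation q (f x))"
    using assms by (subst integral_measure_pmf_real[of "set_pmf p"]) (auto simp: mult.commute)
  finally show ?thesis .
qed

lemma expectation_two_point_law:
  "measure_pmf.expectation (two_point_law a b) (f :: _ \<Rightarrow> real) = (f a + f b) / 2"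
  unfolding two_point_law_def by simp

lemma finite_set_two_point_law: "finite (set_pmf (two_point_law a b))"
  unfolding two_point_law_def by simp

lemma expectation_Pi_pmf_component:
  fixes f :: "'a \<Rightarrow> real"
  assumes "finite A" "i \<in> A"
  shows "measure_pmf.expectation (Pi_pmf A d P) (\<lambda>X. f (X i)) = measure_pmf.expectation (P i) f"
proof -
  have "measure_pmf.expectation (Pi_pmf A d P) (\<lambda>X. f (X i)) =
      measure_pmf.expectation (map_pmf (\<lambda>X. X i) (Pi_pmf A d P)) f"
    by simp
  also have "map_pmf (\<lambda>X. X i) (Pi_pmf A d P) = P i"
    using assms by (simp add: Pi_pmf_component)
  finally show ?thesis .
qed

lemma expectation_Pi_pmf_pair:
  fixes f :: "'a \<Rightarrow> 'a \<Rightarrow> real"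
  assumes "finite A" "i \<in> A" "j \<in> A" "i \<noteq> j"
  shows "measure_pmf.expectation (Pi_pmf A d P) (\<lambda>X. f (X i) (X j)) =
    measure_pmf.expectation (pair_pmf (P i) (P j)) (\<lambda>(x, y). f x y)"
proof -
  have "measure_pmf.expectation (Pi_pmf A d P) (\<lambda>X. f (X i) (X j)) =
      measure_pmf.expectation (map_pmf (\<lambda>X. (X i, X j)) (Pi_pmf A d P)) (\<lambda>(x, y). f x y)"
    by simp
  also have "map_pmf (\<lambda>X. (X i, X j)) (Pi_pmf A d P) = pair_pmf (P i) (P j)"
    using assms by (rule map_pmf_Pi_pmf_pair)
  finally show ?thesis .
qed

lemma expectation_Pi_pmf_triple:
  fixes f :: "'a \<Rightarrow> 'a \<Rightarrow> 'a \<Rightarrow> real"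
  assumes "finite A" "i \<in> A" "j \<in> A" "k \<in> A" "i \<noteq> j" "i \<noteq> k" "j \<noteq> k"
  shows "measure_pmf.expectation (Pi_pmf A d P) (\<lambda>X. f (X i) (X j) (X k)) =
    measure_pmf.expectation (pair_pmf (P i) (pair_pmf (P j) (P k))) (\<lambda>(x, y, z). f x y z)"
proof -
  have "measure_pmf.expectation (Pi_pmf A d P) (\<lambda>X. f (X i) (X j) (X k)) =
      measure_pmf.expectation (map_pmf (\<lambda>X. (X i, X j, X k)) (Pi_pmf A d P)) (\<lambda>(x, y, z). f x y z)"
    by simp
  also have "map_pmf (\<lambda>X. (X i, X j, X k)) (Pi_pmf A d P) = pair_pmf (P i) (pair_pmf (P j) (P k))"
    using assms by (rule map_pmf_Pi_pmf_triple)
  finally show ?thesis .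
qed

lemma of_nat_card_Diff_singleton:
  assumes "finite A" "x \<in> A"
  shows "of_nat (card (A - {x})) = of_nat (card A) - (1 :: 'b :: ring_1)"
  using card.remove[OF assms] by simp

lemma sum_expectation_Pi_pmf_iid_pair:
  fixes f :: "'a \<Rightarrow> 'a \<Rightarrow> real"
  assumes "finite S" "l \<in> S"
  shows "(\<Sum>k\<in>S. measure_pmf.expectation (Pi_pmf S d (\<lambda>_. p)) (\<lambda>X. f (X l) (X k))) =
    measure_pmf.expectation p (\<lambda>x. f x x)
    + (real (card S) - 1) * measure_pmf.expectation (pair_pmf p p) (\<lambda>(x, y). f x y)"
proof -
  let ?Q = "Pi_pmf S d (\<lambda>_. p)"
  have "(\<Sum>k\<in>S. measure_pmf.expectation ?Q (\<lambda>X. f (X l) (X k))) =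
      measure_pmf.expectation ?Q (\<lambda>X. f (X l) (X l)) +
      (\<Sum>k\<in>S - {l}. measure_pmf.expectation ?Q (\<lambda>X. f (X l) (X k)))"
    using assms by (rule sum.remove)
  also have "\<dots> = measure_pmf.expectation p (\<lambda>x. f x x) +
      (\<Sum>k\<in>S - {l}. measure_pmf.expectation (pair_pmf p p) (\<lambda>(x, y). f x y))"
    using assms by (intro arg_cong2[where f="(+)"] sum.cong refl
      expectation_Pi_pmf_component[where f="\<lambda>x. f x x"] expectation_Pi_pmf_pair) auto
  moreover have "card (S - {l}) = real (card S) - 1"
    using assms by (rule of_nat_card_Diff_singleton)
  ultimately show ?thesis by simp
qed

lemma sum_expectation_Pi_pmf_iid_triple:
  fixes f :: "'a \<Rightarrow> 'a \<Rightarrow> 'a \<Rightarrow> real"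
  assumes "finite S" "l \<in> S"
  shows "(\<Sum>k\<in>S. \<Sum>m\<in>S. measure_pmf.expectation (Pi_pmf S d (\<lambda>_. p)) (\<lambda>X. f (X l) (X k) (X m))) =
    measure_pmf.expectation p (\<lambda>x. f x x x)
    + (real (card S) - 1) * (measure_pmf.expectation (pair_pmf p p) (\<lambda>(x, y). f x x y)
       + measure_pmf.expectation (pair_pmf p p) (\<lambda>(x, y). f x y x)
       + measure_pmf.expectation (pair_pmf p p) (\<lambda>(x, y). f x y y))
    + (real (card S) - 1) * (real (card S) - 2)
       * measure_pmf.expectation (pair_pmf p (pair_pmf p p)) (\<lambda>(x, y, z). f x y z)"
proof -
  let ?Q = "Pi_pmf S d (\<lambda>_. p)"
  have off_diagonal: "(\<Sum>m\<in>S. measure_pmf.expectation ?Q (\<lambda>X. f (X l) (X k) (X m))) =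
      measure_pmf.expectation (pair_pmf p p) (\<lambda>(x, y). f x y x)
      + measure_pmf.expectation (pair_pmf p p) (\<lambda>(x, y). f x y y)
      + (real (card S) - 2) * measure_pmf.expectation (pair_pmf p (pair_pmf p p)) (\<lambda>(x, y, z). f x y z)"
    if k: "k \<in> S - {l}" for k
  proof -
    have "(\<Sum>m\<in>S. measure_pmf.expectation ?Q (\<lambda>X. f (X l) (X k) (X m))) =
        measure_pmf.expectation ?Q (\<lambda>X. f (X l) (X k) (X l))
        + (measure_pmf.expectation ?Q (\<lambda>X. f (X l) (X k) (X k))
        + (\<Sum>m\<in>S - {l} - {k}. measure_pmf.expectation ?Q (\<lambda>X. f (X l) (X k) (X m))))"
      using assms k by (simp add: sum.remove)
    also have "\<dots> = measure_pmf.expectation (pair_pmf p p) (\<lambda>(x, y). f x y x)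
        + (measure_pmf.expectation (pair_pmf p p) (\<lambda>(x, y). f x y y)
        + (\<Sum>m\<in>S - {l} - {k}. measure_pmf.expectation (pair_pmf p (pair_pmf p p)) (\<lambda>(x, y, z). f x y z)))"
      using assms k by (intro arg_cong2[where f="(+)"] sum.cong refl
        expectation_Pi_pmf_pair[where f="\<lambda>x y. f x y x"]
        expectation_Pi_pmf_pair[where f="\<lambda>x y. f x y y"] expectation_Pi_pmf_triple) auto
    moreover have "card (S - {l} - {k}) = real (card S) - 2"
    proof -
      have "real (card (S - {l} - {k})) = real (card (S - {l})) - 1"
        using assms k by (intro of_nat_card_Diff_singleton) auto
      moreover have "real (card (S - {l})) = real (card S) - 1"
        using assms by (rule of_nat_card_Diff_singleton)
      ultimately show ?thesis by linarith
    qed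
    ultimately show ?thesis by simp
  qed
  have "(\<Sum>k\<in>S. \<Sum>m\<in>S. measure_pmf.expectation ?Q (\<lambda>X. f (X l) (X k) (X m))) =
      (\<Sum>m\<in>S. measure_pmf.expectation ?Q (\<lambda>X. f (X l) (X l) (X m)))
      + (\<Sum>k\<in>S - {l}. \<Sum>m\<in>S. measure_pmf.expectation ?Q (\<lambda>X. f (X l) (X k) (X m)))"
    using assms by (rule sum.remove)
  also have "(\<Sum>m\<in>S. measure_pmf.expectation ?Q (\<lambda>X. f (X l) (X l) (X m))) =
      measure_pmf.expectation p (\<lambda>x. f x x x)
      + (real (card S) - 1) * measure_pmf.expectation (pair_pmf p p) (\<lambda>(x, y). f x x y)"
    using assms by (rule sum_expectation_Pi_pmf_iid_pair[where f="\<lambda>x y. f x x y"])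
  also have "(\<Sum>k\<in>S - {l}. \<Sum>m\<in>S. measure_pmf.expectation ?Q (\<lambda>X. f (X l) (X k) (X m))) =
      (real (card S) - 1) * (measure_pmf.expectation (pair_pmf p p) (\<lambda>(x, y). f x y x)
      + measure_pmf.expectation (pair_pmf p p) (\<lambda>(x, y). f x y y)
      + (real (card S) - 2) * measure_pmf.expectation (pair_pmf p (pair_pmf p p)) (\<lambda>(x, y, z). f x y z))"
    using assms of_nat_card_Diff_singleton[where 'b=real, OF assms] by (simp add: off_diagonal)
  finally show ?thesis by (simp add: algebra_simps)
qed

lemma norm_diff_scaleR_sum_squared:
  fixes x :: "'a::real_inner" and v :: "'i \<Rightarrow> 'a"
  shows "(norm (x - c *\<^sub>R (\<Sum>k\<in>S. w k *\<^sub>R v k)))\<^sup>2 =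
    x \<bullet> x - 2 * c * (\<Sum>k\<in>S. w k * (x \<bullet> v k))
    + c\<^sup>2 * (\<Sum>k\<in>S. \<Sum>m\<in>S. w k * w m * (v k \<bullet> v m))"
proof -
  define s where "s = (\<Sum>k\<in>S. w k *\<^sub>R v k)"
  have "(norm (x - c *\<^sub>R s))\<^sup>2 = x \<bullet> x - 2 * c * (x \<bullet> s) + c\<^sup>2 * (s \<bullet> s)"
    unfolding power2_norm_eq_inner
    by (simp add: inner_diff_left inner_diff_right inner_commute power2_eq_square algebra_simps)
  moreover have "x \<bullet> s = (\<Sum>k\<in>S. w k * (x \<bullet> v k))"
    by (simp add: s_def inner_sum_right)
  moreover have "s \<bullet> s = (\<Sum>k\<in>S. (w k *\<^sub>R v k) \<bullet> s)"
    unfolding s_def by (rule inner_sum_left)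
  moreover have "\<dots> = (\<Sum>k\<in>S. \<Sum>m\<in>S. w k * w m * (v k \<bullet> v m))"
    by (simp add: s_def inner_sum_right mult_ac)
  ultimately show ?thesis
    by (simp add: s_def)
qed

lemma inner_unit_vectors_bounded:
  fixes x y :: "'a::real_inner"
  assumes "norm x = 1" "norm y = 1"
  shows "x \<bullet> y \<in> {-1..1}"
  using Cauchy_Schwarz_ineq2[of x y] assms by (simp add: abs_le_iff)

definition att_form :: "'a::real_inner \<Rightarrow> 'a \<Rightarrow> 'a \<Rightarrow> 'a \<Rightarrow> real" where
  "att_form mu0 mu1 x y = (x \<bullet> mu0) * (mu0 \<bullet> y) + (x \<bullet> mu1) * (mu1 \<bullet> y)"

lemma att_form_commute: "att_form mu0 mu1 x y = att_form mu0 mu1 y x"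
  by (simp add: att_form_def inner_commute mult.commute)

lemma T_lin_eq_att_form: "T_lin lam L mu0 mu1 X l =
  (2 / real L) *\<^sub>R (\<Sum>k\<in>{1..L}. (lam * att_form mu0 mu1 (X l) (X k)) *\<^sub>R X k)"
  by (simp add: T_lin_def att_form_def)

lemma expectation_row_loss:
  fixes a b mu0 mu1 :: "real^'d"
  assumes "norm a = 1" "norm b = 1" "a \<bullet> b = 0" "l \<in> {1..L}"
  shows "measure_pmf.expectation (rows_law L (two_point_law a b))
      (\<lambda>X. (norm (X l - T_lin lam L mu0 mu1 X l))\<^sup>2) =
    1 - lam * (real L + 1) / real L * (att_form mu0 mu1 a a + att_form mu0 mu1 b b)
    + lam\<^sup>2 * (real L + 3) / (2 * real L) * ((att_form mu0 mu1 a a)\<^sup>2 + (att_form mu0 mu1 b b)\<^sup>2)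
    + lam\<^sup>2 * (real L - 1) / real L * (att_form mu0 mu1 a b)\<^sup>2"
proof -
  define p where "p = two_point_law a b"
  define Q where "Q = rows_law L p"
  let ?A = "att_form mu0 mu1"
  have a: "a \<bullet> a = 1" and b: "b \<bullet> b = 1"
    using assms(1,2) by (simp_all add: norm_eq_1)
  have ab: "a \<bullet> b = 0" and ba: "b \<bullet> a = 0"
    using assms(3) by (simp_all add: inner_commute)
  have "finite (set_pmf Q)"
    unfolding Q_def rows_law_def p_def
    by (simp add: set_Pi_pmf finite_PiE_dflt finite_set_two_point_law)
  note integrable = integrable_measure_pmf_finite[OF this]
  have "measure_pmf.expectation Q (\<lambda>X. (norm (X l - T_lin lam L mu0 mu1 X l))\<^sup>2) =
      measure_pmf.expectation Q (\<lambda>X. X l \<bullet> X l)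
      - 2 * (2 / real L) * (\<Sum>k\<in>{1..L}. measure_pmf.expectation Q
          (\<lambda>X. lam * ?A (X l) (X k) * (X l \<bullet> X k)))
      + (2 / real L)\<^sup>2 * (\<Sum>k\<in>{1..L}. \<Sum>m\<in>{1..L}. measure_pmf.expectation Q
          (\<lambda>X. lam * ?A (X l) (X k) * (lam * ?A (X l) (X m)) * (X k \<bullet> X m)))"
    unfolding T_lin_eq_att_form norm_diff_scaleR_sum_squared
    by (simp add: integrable Bochner_Integration.integral_sum)
  also have "measure_pmf.expectation Q (\<lambda>X. X l \<bullet> X l) = 1"
    using assms(4)
      expectation_Pi_pmf_component[where f="\<lambda>x :: real^'d. x \<bullet> x" and A="{1..L}" and i=l]
    unfolding Q_def rows_law_def by (simp add: p_def expectation_two_point_law a b)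
  also have "(\<Sum>k\<in>{1..L}. measure_pmf.expectation Q (\<lambda>X. lam * ?A (X l) (X k) * (X l \<bullet> X k))) =
      lam * (real L + 1) / 4 * (?A a a + ?A b b)"
    using assms(4) unfolding Q_def rows_law_def
    by (subst sum_expectation_Pi_pmf_iid_pair[where f="\<lambda>x y. lam * ?A x y * (x \<bullet> y)"])
      (simp_all add: expectation_pair_pmf p_def finite_set_two_point_law
        expectation_two_point_law a b ab ba field_simps)
  also have "(\<Sum>k\<in>{1..L}. \<Sum>m\<in>{1..L}. measure_pmf.expectation Q
          (\<lambda>X. lam * ?A (X l) (X k) * (lam * ?A (X l) (X m)) * (X k \<bullet> X m))) =
      lam\<^sup>2 * real L / 8 * ((real L + 3) * ((?A a a)\<^sup>2 + (?A b b)\<^sup>2) + 2 * (real L - 1) * (?A a b)\<^sup>2)"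
    using assms(4) unfolding Q_def rows_law_def
    by (subst sum_expectation_Pi_pmf_iid_triple
        [where f="\<lambda>x y z. lam * ?A x y * (lam * ?A x z) * (y \<bullet> z)"])
      (simp_all add: expectation_pair_pmf p_def finite_set_two_point_law expectation_two_point_law
        a b ab ba att_form_commute[of _ _ b a] field_simps power2_eq_square)
  finally show ?thesis
    using assms(4) by (simp add: Q_def p_def field_simps power2_eq_square)
qed

theorem proposition7:
  fixes ms0 ms1 mu0 mu1 :: "real^'d" and L :: nat and lam :: real
  assumes "CARD('d) \<ge> 2" and "L \<ge> 1" and "lam > 0"
    and "norm ms0 = 1" and "norm ms1 = 1" and "ms0 \<bullet> ms1 = 0"
  shows "risk lam L ms0 ms1 mu0 mu1 =
           risk_red lam L (ms0 \<bullet> mu0) (ms1 \<bullet> mu1) (mu1 \<bullet> ms0) (mu0 \<bullet> ms1)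
         \<and> (norm mu0 = 1 \<and> norm mu1 = 1 \<longrightarrow>
              (ms0 \<bullet> mu0) \<in> {-1..1} \<and> (ms1 \<bullet> mu1) \<in> {-1..1} \<and>
              (mu1 \<bullet> ms0) \<in> {-1..1} \<and> (mu0 \<bullet> ms1) \<in> {-1..1})"
proof (intro conjI impI)
  let ?A = "att_form mu0 mu1"
  have "risk lam L ms0 ms1 mu0 mu1 =
      1 - lam * (real L + 1) / real L * (?A ms0 ms0 + ?A ms1 ms1)
      + lam\<^sup>2 * (real L + 3) / (2 * real L) * ((?A ms0 ms0)\<^sup>2 + (?A ms1 ms1)\<^sup>2)
      + lam\<^sup>2 * (real L - 1) / real L * (?A ms0 ms1)\<^sup>2"
    using assms(2) unfolding risk_def by (simp add: expectation_row_loss assms(4-6))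
  moreover have "?A ms0 ms0 = (ms0 \<bullet> mu0)\<^sup>2 + (mu1 \<bullet> ms0)\<^sup>2"
    and "?A ms1 ms1 = (ms1 \<bullet> mu1)\<^sup>2 + (mu0 \<bullet> ms1)\<^sup>2"
    and "?A ms0 ms1 = (ms0 \<bullet> mu0) * (mu0 \<bullet> ms1) + (ms1 \<bullet> mu1) * (mu1 \<bullet> ms0)"
    by (simp_all add: att_form_def inner_commute power2_eq_square mult.commute)
  ultimately show "risk lam L ms0 ms1 mu0 mu1 =
      risk_red lam L (ms0 \<bullet> mu0) (ms1 \<bullet> mu1) (mu1 \<bullet> ms0) (mu0 \<bullet> ms1)"
    by (simp add: risk_red_def algebra_simps)
next
  assume "norm mu0 = 1 \<and> norm mu1 = 1"
  with assms(4,5) show "(ms0 \<bullet> mu0) \<in> {-1..1}" "(ms1 \<bullet> mu1) \<in> {-1..1}"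
      "(mu1 \<bullet> ms0) \<in> {-1..1}" "(mu0 \<bullet> ms1) \<in> {-1..1}"
    by (simp_all only: inner_unit_vectors_bounded)
qed

end
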